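(* Consider $N$ learners $\mathcal V=\{1,\dots,N\}$ running the privacy-preserving decentralized aggregation algorithm described in the context for rounds $t=1,\dots,T$, with communication graphs $\mathcal G^{(t)}$ that are undirected, connected, and fixed within each round $t$. Let $A^{(t)}=[a_{ij}^{(t)}]\in\mathbb R^{N\times N}$ be the Metropolis–Hastings matrix of $\mathcal G^{(t)}$ (with $a_{ij}^{(t)}=0$ when $j\notin\bar{\mathcal N}_i^{(t)}$), and let $1_N$ be the all-ones vector in $\mathbb R^N$. Suppose the prime $p$ and the number of consensus iterations $K$ satisfy $$p>\max\Big\{N,\;1+2\cdot 10^{\sigma}N\max_{t,i,l}|\theta_{il}^{(t)}|\Big\},\qquad \max_{t}\,2p\sqrt N\,\big\|N(A^{(t)})^K-1_N1_N^T\big\|<1,$$ where the maximum is over $t\in\{1,\dots,T\}$, $i\in\mathcal V$, $l\in\{1,\dots,n\}$, and $\|\cdot\|$ is the $\ell_2$ (spectral) norm of a matrix. Then $\tilde\theta_i^{(t)}=\theta^{(t)}=\sum_{j\in\mathcal V}w_j\theta_j^{(t)}$ for all $i\in\mathcal V$ and all $t\in\{1,\dots,T\}$.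
   Context: Setting. There are $N$ learners $\mathcal V=\{1,\dots,N\}$ and a model dimension $n$. Each learner $i$ has a fixed weight $w_i\in(0,1]$. In each round $t\in\{1,\dots,T\}$ each learner $i$ holds a local model $\theta_i^{(t)}=(\theta_{i1}^{(t)},\dots,\theta_{in}^{(t)})\in\mathbb R^n$ (produced by arbitrary local training), and the desired global model is $\theta^{(t)}=\sum_{i\in\mathcal V}w_i\theta_i^{(t)}$. Put $\bar\theta_i^{(t)}(0)=w_i\theta_i^{(t)}$. A precision level $\sigma\in\mathbb N$ is fixed: all real numbers are kept to $\sigma$ fractional digits, so in particular $10^\sigma\bar\theta_{il}^{(t)}(0)\in\mathbb Z$. In round $t$ the communication graph is $\mathcal G^{(t)}=(\mathcal V,\mathcal E^{(t)})$; $\mathcal N_i^{(t)}=\{j\neq i:(i,j)\in\mathcal E^{(t)}\}$ and $\bar{\mathcal N}_i^{(t)}=\mathcal N_i^{(t)}\cup\{i\}$. Algorithm (parameters: a prime $p$ and positive integers $T,K$, agreed by all learners). In each round $t$: (1) Metropolis–Hastings weights: each learner $i$ sets $a_{ij}^{(t)}=1/(\max\{|\mathcal N_i^{(t)}|,|\mathcal N_j^{(t)}|\}+1)$ for $j\in\mathcal N_i^{(t)}$, $a_{ii}^{(t)}=1-\sum_{j\in\mathcal N_i^{(t)}}a_{ij}^{(t)}$, and $a_{ij}^{(t)}=0$ otherwise. (2) Share generation: for each $j\in\bar{\mathcal N}_i^{(t)}$ learner $i$ computes $\delta_j=\prod_{r\in\bar{\mathcal N}_i^{(t)},r\ne j}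 r\,(r-j)^{-1}\bmod p$ (inverses in $\mathbb Z_p$). For each $l\in\{1,\dots,n\}$, with $\tau=|\mathcal N_i^{(t)}|$, learner $i$ picks fresh independent $c_1,\dots,c_\tau\in\mathbb Z_p$ uniformly at random with $c_\tau\ne0$, forms $H(\eta)=10^\sigma\bar\theta_{il}^{(t)}(0)+c_1\eta+\dots+c_\tau\eta^\tau$, sets $\mathcal H_{il}^{j(t)}=H(j)\bmod p$ and $\mathcal S_{il}^{j(t)}=\mathcal H_{il}^{j(t)}\delta_j\bmod p$ for $j\in\bar{\mathcal N}_i^{(t)}$. It sends $\mathcal S_i^{j(t)}=(\mathcal S_{il}^{j(t)})_{l=1}^n$ to each neighbor $j\in\mathcal N_i^{(t)}$ and keeps $\mathcal S_i^{i(t)}$. (3) Each learner $i$ forms $s_i^{(t)}(0)=\sum_{j\in\bar{\mathcal N}_i^{(t)}}\mathcal S_j^{i(t)}\bmod p$ (componentwise, values in $\{0,\dots,p-1\}$) and sends it to its neighbors. (4) For $k=0,\dots,K-1$ each learner $i$ computes, in real arithmetic, $s_i^{(t)}(k+1)=a_{ii}^{(t)}s_i^{(t)}(k)+\sum_{j\in\mathcal N_i^{(t)}}a_{ij}^{(t)}s_j^{(t)}(k)$ and sends it to its neighbors. (5) Each learner $i$ sets, for each $l$, $z_{il}^{(t)}=\lfloor N s_{il}^{(t)}(K)\rceil\bmod p$, where $\lfloor a\rceil$ is rounding to the nearest integer ($\lfloor a\rceil=\lfloor a\rfloor$ if $a-\lfloor a\rfloor<0.5$, else $\lceil a\rceil$),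 and $\tilde\theta_{il}^{(t)}=z_{il}^{(t)}/10^\sigma$ if $0\le z_{il}^{(t)}\le (p-1)/2$, $\tilde\theta_{il}^{(t)}=(z_{il}^{(t)}-p)/10^\sigma$ if $(p+1)/2\le z_{il}^{(t)}<p$; it sets $\tilde\theta_i^{(t)}=(\tilde\theta_{il}^{(t)})_{l=1}^n$ (used as its initial model for the next round's local training). *)

theory Defs
  imports "HOL-Analysis.Analysis" "HOL-Number_Theory.Number_Theory"
begin

text \<open>Learners are labelled 1..N.  A round's communication graph is given by an edge
relation E on the labels; neighbourhoods exclude the learner itself.\<close>

definition nbrs :: "nat \<Rightarrow> (nat \<Rightarrow> nat \<Rightarrow> bool) \<Rightarrow> nat \<Rightarrow> nat set" where
  "nbrs N E i = {j \<in> {1..N}. j \<noteq> i \<and> E i j}"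

definition cnbrs :: "nat \<Rightarrow> (nat \<Rightarrow> nat \<Rightarrow> bool) \<Rightarrow> nat \<Rightarrow> nat set" where
  "cnbrs N E i = insert i (nbrs N E i)"

definition undirected_connected :: "nat \<Rightarrow> (nat \<Rightarrow> nat \<Rightarrow> bool) \<Rightarrow> bool" where
  "undirected_connected N E \<longleftrightarrow>
     (\<forall>i j. E i j = E j i) \<and>
     (\<forall>i\<in>{1..N}. \<forall>j\<in>{1..N}.
        (\<lambda>x y. x \<in> {1..N} \<and> y \<in> {1..N} \<and> x \<noteq> y \<and> E x y)\<^sup>*\<^sup>* i j)"

definition mh :: "nat \<Rightarrow> (nat \<Rightarrow> nat \<Rightarrow> bool) \<Rightarrow> nat \<Rightarrow> nat \<Rightarrow> real" where
  "mh N E i j =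
    (if j \<in> nbrs N E i then 1 / (real (max (card (nbrs N E i)) (card (nbrs N E j))) + 1)
     else if j = i then
       1 - (\<Sum>r\<in>nbrs N E i. 1 / (real (max (card (nbrs N E i)) (card (nbrs N E r))) + 1))
     else 0)"

text \<open>Matrices indexed by {1..N}: powers and the l2 operator (spectral) norm.\<close>
fun mat_pow :: "nat \<Rightarrow> (nat \<Rightarrow> nat \<Rightarrow> real) \<Rightarrow> nat \<Rightarrow> nat \<Rightarrow> nat \<Rightarrow> real" where
  "mat_pow N A 0 = (\<lambda>i j. if i = j then 1 else 0)"
| "mat_pow N A (Suc k) = (\<lambda>i j. \<Sum>r=1..N. A i r * mat_pow N A k r j)"

definition spec_norm :: "nat \<Rightarrow> (nat \<Rightarrow> nat \<Rightarrow> real) \<Rightarrow> real" where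
  "spec_norm N M = Sup {sqrt (\<Sum>i=1..N. (\<Sum>j=1..N. M i j * x j)\<^sup>2) | x.
                          (\<Sum>j=1..N. (x j)\<^sup>2) \<le> 1}"

text \<open>Step (2): Lagrange coefficient delta_j computed by learner i, and the share S_il^j.
 Y i l is the integer 10^sigma * bar theta_il(0); c i l m (m = 1..tau) are the random coefficients.\<close>
definition lag_coeff :: "nat \<Rightarrow> nat \<Rightarrow> (nat \<Rightarrow> nat \<Rightarrow> bool) \<Rightarrow> nat \<Rightarrow> nat \<Rightarrow> int" where
  "lag_coeff p N E i j =
     (\<Prod>r\<in>cnbrs N E i - {j}. int r * modular_inverse (int p) (int r - int j)) mod int p"

definition share :: "nat \<Rightarrow> nat \<Rightarrow> (nat \<Rightarrow> nat \<Rightarrow> bool) \<Rightarrow> (nat \<Rightarrow> nat \<Rightarrow> int)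
                      \<Rightarrow> (nat \<Rightarrow> nat \<Rightarrow> nat \<Rightarrow> int) \<Rightarrow> nat \<Rightarrow> nat \<Rightarrow> nat \<Rightarrow> int" where
  "share p N E Y c i j l =
     (((Y i l + (\<Sum>m=1..card (nbrs N E i). c i l m * int j ^ m)) mod int p)
        * lag_coeff p N E i j) mod int p"

definition s0 :: "nat \<Rightarrow> nat \<Rightarrow> (nat \<Rightarrow> nat \<Rightarrow> bool) \<Rightarrow> (nat \<Rightarrow> nat \<Rightarrow> int)
                      \<Rightarrow> (nat \<Rightarrow> nat \<Rightarrow> nat \<Rightarrow> int) \<Rightarrow> nat \<Rightarrow> nat \<Rightarrow> int" where
  "s0 p N E Y c i l = (\<Sum>j\<in>cnbrs N E i. share p N E Y c j i l) mod int p"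

text \<open>Step (4): consensus iterations in real arithmetic (one coordinate).\<close>
fun cons_iter :: "nat \<Rightarrow> (nat \<Rightarrow> nat \<Rightarrow> bool) \<Rightarrow> (nat \<Rightarrow> real) \<Rightarrow> nat \<Rightarrow> nat \<Rightarrow> real" where
  "cons_iter N E s 0 i = s i"
| "cons_iter N E s (Suc k) i =
     mh N E i i * cons_iter N E s k i + (\<Sum>j\<in>nbrs N E i. mh N E i j * cons_iter N E s k j)"

text \<open>Step (5): rounding (floor (a + 1/2) is the paper's rounding), reduction mod p, decoding.\<close>
definition round_half_up :: "real \<Rightarrow> int" where
  "round_half_up a = \<lfloor>a + 1/2\<rfloor>"

definition decode :: "nat \<Rightarrow> nat \<Rightarrow> int \<Rightarrow> real" where
  "decode p \<sigma> z = (if real_of_int z \<le> (real p - 1) / 2 then real_of_int z / 10 ^ \<sigma>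
                    else (real_of_int z - real p) / 10 ^ \<sigma>)"

text \<open>Output tilde theta_il of learner i in a round with graph E, weighted local models
 W i l = w_i theta_il (= bar theta_il(0)), coefficients c.\<close>
definition alg_output :: "nat \<Rightarrow> nat \<Rightarrow> nat \<Rightarrow> nat \<Rightarrow> (nat \<Rightarrow> nat \<Rightarrow> bool) \<Rightarrow> (nat \<Rightarrow> nat \<Rightarrow> real)
                      \<Rightarrow> (nat \<Rightarrow> nat \<Rightarrow> nat \<Rightarrow> int) \<Rightarrow> nat \<Rightarrow> nat \<Rightarrow> real" where
  "alg_output N \<sigma> p K E W c i l =
     (let Y = (\<lambda>j l'. \<lfloor>10 ^ \<sigma> * W j l'\<rfloor>);
          sK = cons_iter N E (\<lambda>j. real_of_int (s0 p N E Y c j l)) K i;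
          z = round_half_up (real N * sK) mod int p
      in decode p \<sigma> z)"

end

theory Submission
  imports Defs "HOL-Computational_Algebra.Polynomial"
begin

(* Learner j hides its integer secret Y_j = 10^sigma w_j theta_j as the constant term of a random
   polynomial of degree |N_j| and hands out its values at the |N_j| + 1 points of its closed
   neighbourhood, multiplied by the Lagrange weights that evaluate an interpolant at 0.  Modulo p
   these weighted values sum to Y_j, so by symmetry of the graph the s_i(0) sum to the sum V of the
   secrets modulo p.  The consensus iteration computes A^K s(0); as 0 <= s_i(0) < p, the
   spectral-norm hypothesis keeps N (A^K s(0))_i within 1/2 of the sum of the s_i(0), so rounding
   recovers it exactly.  Reducing mod p gives V mod p, and since |V| < (p - 1)/2 the symmetric
   decoding returns V / 10^sigma. *)

lemma lagrange_interpolation: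
  fixes x :: "'b \<Rightarrow> 'a::field" and H :: "'a poly"
  assumes fin: "finite C" and inj: "inj_on x C" and deg: "degree H < card C"
  shows "poly H y = (\<Sum>i\<in>C. poly H (x i) * (\<Prod>r\<in>C-{i}. (y - x r) / (x i - x r)))"
proof -
  define P where
    "P = (\<Sum>i\<in>C. Polynomial.smult (poly H (x i))
                   (\<Prod>r\<in>C-{i}. Polynomial.smult (1 / (x i - x r)) [:- x r, 1:]))"
  have poly_P: "poly P z = (\<Sum>i\<in>C. poly H (x i) * (\<Prod>r\<in>C-{i}. (z - x r) / (x i - x r)))" for z
    unfolding P_def poly_sum poly_smult poly_prod by (simp add: field_simps)
  have deg_P: "degree P \<le> card C - 1"
    unfolding P_def
  proof (rule degree_sum_le[OF fin])
    fix i assume i: "i \<in> C"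
    have "degree (\<Prod>r\<in>C-{i}. Polynomial.smult (1 / (x i - x r)) [:- x r, 1:])
            \<le> (\<Sum>r\<in>C-{i}. degree (Polynomial.smult (1 / (x i - x r)) [:- x r, 1:]))"
      using degree_prod_sum_le[of "C-{i}" "\<lambda>r. Polynomial.smult (1 / (x i - x r)) [:- x r, 1:]"] fin
      by (simp add: o_def)
    also have "\<dots> \<le> (\<Sum>r\<in>C-{i}. 1)"
      by (intro sum_mono) (simp add: degree_smult_le)
    also have "\<dots> = card C - 1"
      using fin i by simp
    finally show "degree (Polynomial.smult (poly H (x i))
                    (\<Prod>r\<in>C-{i}. Polynomial.smult (1 / (x i - x r)) [:- x r, 1:])) \<le> card C - 1"
      by (meson degree_smult_le order_trans)
  qed
  have interpolates: "poly P (x j) = poly H (x j)" if j: "j \<in> C" for j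
  proof -
    have vanish: "(\<Prod>r\<in>C-{i}. (x j - x r) / (x i - x r)) = 0" if "i \<in> C - {j}" for i
      using fin that j by (intro prod_zero bexI[of _ j]) auto
    have one: "(\<Prod>r\<in>C-{j}. (x j - x r) / (x j - x r)) = 1"
      using inj j by (intro prod.neutral ballI) (auto simp: inj_on_def)
    have "poly P (x j) = poly H (x j) * (\<Prod>r\<in>C-{j}. (x j - x r) / (x j - x r))
            + (\<Sum>i\<in>C-{j}. poly H (x i) * (\<Prod>r\<in>C-{i}. (x j - x r) / (x i - x r)))"
      unfolding poly_P using fin j by (simp add: sum.remove)
    also have "\<dots> = poly H (x j)"
      using vanish one by simp
    finally show ?thesis .
  qed
  have "P = H"
    by (rule poly_eqI_degree[of "x ` C"])
       (use interpolates deg_P deg fin inj in \<open>auto simp: card_image\<close>)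
  then show ?thesis
    unfolding poly_P[symmetric] by simp
qed

lemma sum_power_lagrange_basis_at_0:
  fixes x :: "'b \<Rightarrow> 'a::field"
  assumes "finite C" and "inj_on x C" and "m < card C"
  shows "(\<Sum>i\<in>C. x i ^ m * (\<Prod>r\<in>C-{i}. x r / (x r - x i))) = 0 ^ m"
proof -
  have "(0::'a) ^ m = poly (Polynomial.monom 1 m) 0"
    by (simp add: poly_monom)
  also have "\<dots> = (\<Sum>i\<in>C. poly (Polynomial.monom 1 m) (x i)
                            * (\<Prod>r\<in>C-{i}. (0 - x r) / (x i - x r)))"
    using assms by (intro lagrange_interpolation) (simp_all add: degree_monom_eq)
  also have "\<dots> = (\<Sum>i\<in>C. x i ^ m * (\<Prod>r\<in>C-{i}. x r / (x r - x i)))"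
  proof -
    have "(0 - a) / (b - a) = a / (a - b)" for a b :: 'a
      by (metis diff_0 minus_diff_eq minus_divide_divide)
    then show ?thesis
      by (simp add: poly_monom)
  qed
  finally show ?thesis ..
qed

(* The previous identity with all denominators cleared, so that it can be read modulo p. *)
lemma sum_power_lagrange_basis_cleared:
  fixes x :: "'b \<Rightarrow> int"
  assumes fin: "finite C" and inj: "inj_on x C" and m: "m < card C"
  shows "(\<Sum>i\<in>C. x i ^ m * (\<Prod>r\<in>C-{i}. x r) * (\<Prod>k\<in>C-{i}. \<Prod>r\<in>C-{k}. x r - x k))
         = 0 ^ m * (\<Prod>k\<in>C. \<Prod>r\<in>C-{k}. x r - x k)"
proof -
  define d where "d k = (\<Prod>r\<in>C-{k}. real_of_int (x r) - real_of_int (x k))" for k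
  have d_nonzero: "d k \<noteq> 0" if "k \<in> C" for k
    unfolding d_def using fin inj that by (subst prod_zero_iff) (auto simp: inj_on_def)
  have "(0::real) ^ m = (\<Sum>i\<in>C. real_of_int (x i) ^ m
                         * (\<Prod>r\<in>C-{i}. real_of_int (x r) / (real_of_int (x r) - real_of_int (x i))))"
    using fin inj m by (intro sum_power_lagrange_basis_at_0[symmetric]) (simp_all add: inj_on_def)
  also have "\<dots> = (\<Sum>i\<in>C. real_of_int (x i) ^ m * (\<Prod>r\<in>C-{i}. real_of_int (x r)) / d i)"
    by (simp add: prod_dividef d_def)
  finally have basis:
    "(0::real) ^ m = (\<Sum>i\<in>C. real_of_int (x i) ^ m * (\<Prod>r\<in>C-{i}. real_of_int (x r)) / d i)" .
  have "(\<Sum>i\<in>C. real_of_int (x i) ^ m * (\<Prod>r\<in>C-{i}. real_of_int (x r)) * (\<Prod>k\<in>C-{i}. d k))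
        = (\<Sum>i\<in>C. real_of_int (x i) ^ m * (\<Prod>r\<in>C-{i}. real_of_int (x r)) / d i * (\<Prod>k\<in>C. d k))"
    by (intro sum.cong refl) (simp add: prod.remove[OF fin] d_nonzero)
  also have "\<dots> = 0 ^ m * (\<Prod>k\<in>C. d k)"
    unfolding basis sum_distrib_right ..
  finally have "real_of_int (\<Sum>i\<in>C. x i ^ m * (\<Prod>r\<in>C-{i}. x r) * (\<Prod>k\<in>C-{i}. \<Prod>r\<in>C-{k}. x r - x k))
                = real_of_int (0 ^ m * (\<Prod>k\<in>C. \<Prod>r\<in>C-{k}. x r - x k))"
    unfolding d_def by simp
  then show ?thesis
    by (simp only: of_int_eq_iff)
qed

lemma coprime_prime_if_abs_less:
  fixes p :: nat and x :: int
  assumes "prime p" and "x \<noteq> 0" and "\<bar>x\<bar> < int p"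
  shows "coprime x (int p)"
proof -
  have "\<not> int p dvd x"
    using assms(2,3) dvd_imp_le_int by force
  moreover have "prime (int p)"
    using assms(1) by simp
  ultimately show ?thesis
    using prime_imp_coprime coprime_commute by blast
qed

(* The coefficient delta_i of step (2) before reduction mod p: the weight of the value at node i
   when interpolating at 0 over the nodes C in Z_p. *)
definition lagrange_weight :: "nat \<Rightarrow> nat set \<Rightarrow> nat \<Rightarrow> int" where
  "lagrange_weight p C i = (\<Prod>r\<in>C-{i}. int r * modular_inverse (int p) (int r - int i))"

lemma sum_power_lagrange_weight_cong:
  fixes p :: nat and C :: "nat set"
  assumes p: "prime p" and fin: "finite C" and less_p: "\<forall>r\<in>C. r < p" and m: "m < card C"
  shows "[(\<Sum>i\<in>C. int i ^ m * lagrange_weight p C i) = 0 ^ m] (mod int p)"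
proof -
  define d where "d k = (\<Prod>r\<in>C-{k}. int r - int k)" for k
  define D where "D = (\<Prod>k\<in>C. d k)"
  have coprime_diff: "coprime (int r - int k) (int p)" if "r \<in> C" "k \<in> C" "r \<noteq> k" for r k
    using that less_p[rule_format, of r] less_p[rule_format, of k]
    by (intro coprime_prime_if_abs_less[OF p]) auto
  have "coprime D (int p)"
    unfolding D_def d_def by (intro prod_coprime_left coprime_diff) auto
  have weight_d: "[lagrange_weight p C i * d i = (\<Prod>r\<in>C-{i}. int r)] (mod int p)"
    if i: "i \<in> C" for i
  proof -
    have "lagrange_weight p C i * d i
          = (\<Prod>r\<in>C-{i}. int r * (modular_inverse (int p) (int r - int i) * (int r - int i)))"
      unfolding lagrange_weight_def d_def prod.distrib[symmetric] by (simp add: mult.assoc)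
    also have "[\<dots> = (\<Prod>r\<in>C-{i}. int r * 1)] (mod int p)"
      using i by (intro cong_prod cong_mult cong_refl cong_modular_inverse2 coprime_diff) auto
    finally show ?thesis
      by simp
  qed
  have "(\<Sum>i\<in>C. int i ^ m * lagrange_weight p C i) * D
        = (\<Sum>i\<in>C. int i ^ m * (lagrange_weight p C i * d i) * (\<Prod>k\<in>C-{i}. d k))"
    unfolding sum_distrib_right D_def
    by (intro sum.cong refl) (simp add: prod.remove[OF fin] mult_ac)
  also have "[\<dots> = (\<Sum>i\<in>C. int i ^ m * (\<Prod>r\<in>C-{i}. int r) * (\<Prod>k\<in>C-{i}. d k))] (mod int p)"
    by (intro cong_sum cong_mult cong_refl weight_d)
  also have "(\<Sum>i\<in>C. int i ^ m * (\<Prod>r\<in>C-{i}. int r) * (\<Prod>k\<in>C-{i}. d k)) = 0 ^ m * D"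
    unfolding D_def d_def by (rule sum_power_lagrange_basis_cleared[OF fin _ m]) simp
  finally show ?thesis
    using cong_mult_rcancel[OF \<open>coprime D (int p)\<close>] by blast
qed

lemma shamir_reconstruction_cong:
  fixes p :: nat and C :: "nat set" and a :: "nat \<Rightarrow> int"
  assumes p: "prime p" and fin: "finite C" and less_p: "\<forall>r\<in>C. r < p" and \<tau>: "\<tau> < card C"
  shows "[(\<Sum>i\<in>C. (a0 + (\<Sum>m=1..\<tau>. a m * int i ^ m)) * lagrange_weight p C i) = a0] (mod int p)"
proof -
  have power_sum: "[(\<Sum>i\<in>C. int i ^ m * lagrange_weight p C i) = 0 ^ m] (mod int p)"
    if "m \<le> \<tau>" for m
    using that \<tau> by (intro sum_power_lagrange_weight_cong[OF p fin less_p]) simp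
  have constant_term: "[(\<Sum>i\<in>C. int i ^ 0 * lagrange_weight p C i) = 1] (mod int p)"
    using power_sum[of 0] by simp
  have higher_terms: "[(\<Sum>i\<in>C. int i ^ m * lagrange_weight p C i) = 0] (mod int p)"
    if "m \<in> {1..\<tau>}" for m
    using power_sum[of m] that by (simp add: power_0_left)
  have "(\<Sum>i\<in>C. (a0 + (\<Sum>m=1..\<tau>. a m * int i ^ m)) * lagrange_weight p C i)
        = a0 * (\<Sum>i\<in>C. int i ^ 0 * lagrange_weight p C i)
          + (\<Sum>m=1..\<tau>. a m * (\<Sum>i\<in>C. int i ^ m * lagrange_weight p C i))"
    by (simp add: algebra_simps sum.distrib sum_distrib_left sum_distrib_right sum.swap[of _ C])
  also have "[\<dots> = a0 * 1 + (\<Sum>m=1..\<tau>. a m * 0)] (mod int p)"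
    by (intro cong_add cong_mult cong_refl cong_sum constant_term higher_terms)
  finally show ?thesis
    by simp
qed

lemma cnbrs_eq:
  assumes "i \<in> {1..N}"
  shows "cnbrs N E i = {j \<in> {1..N}. j = i \<or> E i j}"
  using assms by (auto simp: cnbrs_def nbrs_def)

lemma card_cnbrs: "card (cnbrs N E i) = Suc (card (nbrs N E i))"
  by (simp add: cnbrs_def nbrs_def)

lemma sum_sum_cnbrs_swap:
  assumes sym: "\<forall>i j. E i j = E j i"
  shows "(\<Sum>i=1..N. \<Sum>j\<in>cnbrs N E i. f i j) = (\<Sum>j=1..N. \<Sum>i\<in>cnbrs N E j. f i j)"
proof -
  have "(\<Sum>i=1..N. \<Sum>j\<in>cnbrs N E i. f i j) = (\<Sum>i=1..N. \<Sum>j\<in>{j \<in> {1..N}. j = i \<or> E i j}. f i j)"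
    by (intro sum.cong refl) (simp add: cnbrs_eq)
  also have "\<dots> = (\<Sum>j=1..N. \<Sum>i\<in>{i \<in> {1..N}. j = i \<or> E i j}. f i j)"
    by (rule sum.swap_restrict) simp_all
  also have "\<dots> = (\<Sum>j=1..N. \<Sum>i\<in>cnbrs N E j. f i j)"
    using sym by (intro sum.cong refl) (auto simp: cnbrs_eq)
  finally show ?thesis .
qed

lemma share_cong:
  "[share p N E Y c j i l
      = (Y j l + (\<Sum>m=1..card (nbrs N E j). c j l m * int i ^ m)) * lagrange_weight p (cnbrs N E j) i]
     (mod int p)"
  unfolding share_def lag_coeff_def lagrange_weight_def cong_def by (simp add: mod_mult_eq)

lemma sum_shares_cong:
  fixes p :: nat
  assumes p: "prime p" and N_less: "N < p" and j: "j \<in> {1..N}"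
  shows "[(\<Sum>i\<in>cnbrs N E j. share p N E Y c j i l) = Y j l] (mod int p)"
proof -
  have sub: "cnbrs N E j \<subseteq> {1..N}"
    using j by (auto simp: cnbrs_eq)
  have "[(\<Sum>i\<in>cnbrs N E j. share p N E Y c j i l)
        = (\<Sum>i\<in>cnbrs N E j. (Y j l + (\<Sum>m=1..card (nbrs N E j). c j l m * int i ^ m))
                              * lagrange_weight p (cnbrs N E j) i)] (mod int p)"
    (is "[_ = ?weighted_values] (mod _)")
    by (intro cong_sum share_cong)
  also have "[?weighted_values = Y j l] (mod int p)"
    using sub N_less
    by (intro shamir_reconstruction_cong[OF p]) (auto simp: card_cnbrs finite_subset)
  finally show ?thesis .
qed

lemma sum_s0_cong:
  fixes p :: nat
  assumes p: "prime p" and N_less: "N < p" and sym: "\<forall>i j. E i j = E j i"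
  shows "[(\<Sum>i=1..N. s0 p N E Y c i l) = (\<Sum>j=1..N. Y j l)] (mod int p)"
proof -
  have "[(\<Sum>i=1..N. s0 p N E Y c i l) = (\<Sum>i=1..N. \<Sum>j\<in>cnbrs N E i. share p N E Y c j i l)] (mod int p)"
    unfolding s0_def by (intro cong_sum) (simp add: cong_def)
  also have "(\<Sum>i=1..N. \<Sum>j\<in>cnbrs N E i. share p N E Y c j i l)
             = (\<Sum>j=1..N. \<Sum>i\<in>cnbrs N E j. share p N E Y c j i l)"
    by (rule sum_sum_cnbrs_swap[OF sym])
  also have "[\<dots> = (\<Sum>j=1..N. Y j l)] (mod int p)"
    by (intro cong_sum sum_shares_cong[OF p N_less]) simp
  finally show ?thesis .
qed

lemma mh_row_sum:
  assumes i: "i \<in> {1..N}"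
  shows "mh N E i i * x i + (\<Sum>j\<in>nbrs N E i. mh N E i j * x j) = (\<Sum>j=1..N. mh N E i j * x j)"
proof -
  have "(\<Sum>j=1..N. mh N E i j * x j) = mh N E i i * x i + (\<Sum>j\<in>{1..N}-{i}. mh N E i j * x j)"
    using i by (simp add: sum.remove)
  also have "(\<Sum>j\<in>{1..N}-{i}. mh N E i j * x j) = (\<Sum>j\<in>nbrs N E i. mh N E i j * x j)"
    by (rule sum.mono_neutral_right) (auto simp: nbrs_def mh_def)
  finally show ?thesis
    by simp
qed

lemma cons_iter_eq_mat_pow:
  assumes "i \<in> {1..N}"
  shows "cons_iter N E s k i = (\<Sum>j=1..N. mat_pow N (mh N E) k i j * s j)"
  using assms
proof (induction k arbitrary: i)
  case 0
  then show ?case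
    by (simp add: if_distrib[of "\<lambda>a. a * _"] cong: if_cong)
next
  case (Suc k)
  have "cons_iter N E s (Suc k) i = (\<Sum>r=1..N. mh N E i r * cons_iter N E s k r)"
    using mh_row_sum[OF Suc.prems] by simp
  also have "\<dots> = (\<Sum>r=1..N. mh N E i r * (\<Sum>j=1..N. mat_pow N (mh N E) k r j * s j))"
    by (intro sum.cong refl) (simp add: Suc.IH)
  also have "\<dots> = (\<Sum>j=1..N. mat_pow N (mh N E) (Suc k) i j * s j)"
    by (simp add: sum_distrib_left sum_distrib_right mult_ac; rule sum.swap)
  finally show ?case .
qed

lemma spec_norm_bdd_above:
  fixes M :: "nat \<Rightarrow> nat \<Rightarrow> real"
  shows "bdd_above {sqrt (\<Sum>i=1..N. (\<Sum>j=1..N. M i j * x j)\<^sup>2) | x. (\<Sum>j=1..N. (x j)\<^sup>2) \<le> 1}"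
proof (rule bdd_aboveI)
  fix v assume "v \<in> {sqrt (\<Sum>i=1..N. (\<Sum>j=1..N. M i j * x j)\<^sup>2) | x. (\<Sum>j=1..N. (x j)\<^sup>2) \<le> 1}"
  then obtain y where v: "v = sqrt (\<Sum>i=1..N. (\<Sum>j=1..N. M i j * y j)\<^sup>2)"
    and y: "(\<Sum>j=1..N. (y j)\<^sup>2) \<le> 1"
    by blast
  have "\<bar>y j\<bar> \<le> 1" if "j \<in> {1..N}" for j
  proof -
    have "(y j)\<^sup>2 \<le> (\<Sum>j=1..N. (y j)\<^sup>2)"
      by (rule member_le_sum) (use that in auto)
    with y have "(y j)\<^sup>2 \<le> 1"
      by linarith
    then show ?thesis
      by (simp add: abs_square_le_1)
  qed
  then have "\<bar>\<Sum>j=1..N. M i j * y j\<bar> \<le> (\<Sum>j=1..N. \<bar>M i j\<bar>)" for i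
    by (intro order_trans[OF sum_abs] sum_mono) (auto simp: abs_mult intro: mult_left_le)
  then have "(\<Sum>j=1..N. M i j * y j)\<^sup>2 \<le> (\<Sum>j=1..N. \<bar>M i j\<bar>)\<^sup>2" for i
    by (metis abs_le_square_iff abs_of_nonneg order_trans abs_ge_zero)
  then show "v \<le> sqrt (\<Sum>i=1..N. (\<Sum>j=1..N. \<bar>M i j\<bar>)\<^sup>2)"
    unfolding v by (intro real_sqrt_le_mono sum_mono)
qed

lemma spec_norm_upper:
  fixes M :: "nat \<Rightarrow> nat \<Rightarrow> real"
  assumes "(\<Sum>j=1..N. (x j)\<^sup>2) \<le> 1"
  shows "sqrt (\<Sum>i=1..N. (\<Sum>j=1..N. M i j * x j)\<^sup>2) \<le> spec_norm N M"
  unfolding spec_norm_def by (rule cSup_upper[OF _ spec_norm_bdd_above]) (use assms in blast)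

lemma spec_norm_nonneg: "0 \<le> spec_norm N M"
  using spec_norm_upper[where x = "\<lambda>_. 0"] by simp

lemma spec_norm_mult_le:
  fixes M :: "nat \<Rightarrow> nat \<Rightarrow> real"
  shows "sqrt (\<Sum>i=1..N. (\<Sum>j=1..N. M i j * x j)\<^sup>2) \<le> spec_norm N M * sqrt (\<Sum>j=1..N. (x j)\<^sup>2)"
proof (cases "(\<Sum>j=1..N. (x j)\<^sup>2) = 0")
  case True
  then have "\<forall>j\<in>{1..N}. x j = 0"
    by (subst (asm) sum_nonneg_eq_0_iff) auto
  then show ?thesis
    by simp
next
  case False
  define nx where "nx = sqrt (\<Sum>j=1..N. (x j)\<^sup>2)"
  have nx_pos: "nx > 0"
    using False unfolding nx_def by (simp add: sum_nonneg order_less_le)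
  have "(\<Sum>j=1..N. (x j / nx)\<^sup>2) = (\<Sum>j=1..N. (x j)\<^sup>2) / nx\<^sup>2"
    by (simp add: power_divide sum_divide_distrib)
  also have "\<dots> = 1"
    using nx_pos unfolding nx_def by (simp add: sum_nonneg)
  finally have "sqrt (\<Sum>i=1..N. (\<Sum>j=1..N. M i j * (x j / nx))\<^sup>2) \<le> spec_norm N M"
    by (intro spec_norm_upper) simp
  moreover have "sqrt (\<Sum>i=1..N. (\<Sum>j=1..N. M i j * (x j / nx))\<^sup>2)
                 = sqrt (\<Sum>i=1..N. (\<Sum>j=1..N. M i j * x j)\<^sup>2) / nx"
  proof -
    have scaled: "(\<Sum>j=1..N. M i j * (x j / nx)) = (\<Sum>j=1..N. M i j * x j) / nx" for i
      by (simp add: sum_divide_distrib)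
    have "(\<Sum>i=1..N. (\<Sum>j=1..N. M i j * (x j / nx))\<^sup>2)
          = (\<Sum>i=1..N. ((\<Sum>j=1..N. M i j * x j) / nx)\<^sup>2)"
      unfolding scaled ..
    also have "\<dots> = (\<Sum>i=1..N. (\<Sum>j=1..N. M i j * x j)\<^sup>2) / nx\<^sup>2"
      by (simp only: power_divide sum_divide_distrib[symmetric])
    finally show ?thesis
      using nx_pos by (simp add: real_sqrt_divide)
  qed
  ultimately show ?thesis
    using nx_pos unfolding nx_def[symmetric] by (simp add: divide_le_eq mult.commute)
qed

lemma abs_row_le_spec_norm:
  fixes M :: "nat \<Rightarrow> nat \<Rightarrow> real"
  assumes i: "i \<in> {1..N}"
  shows "\<bar>\<Sum>j=1..N. M i j * x j\<bar> \<le> spec_norm N M * sqrt (\<Sum>j=1..N. (x j)\<^sup>2)"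
proof -
  have "(\<Sum>j=1..N. M i j * x j)\<^sup>2 \<le> (\<Sum>i=1..N. (\<Sum>j=1..N. M i j * x j)\<^sup>2)"
    by (rule member_le_sum) (use i in auto)
  then have "\<bar>\<Sum>j=1..N. M i j * x j\<bar> \<le> sqrt (\<Sum>i=1..N. (\<Sum>j=1..N. M i j * x j)\<^sup>2)"
    using real_sqrt_le_mono by fastforce
  also have "\<dots> \<le> spec_norm N M * sqrt (\<Sum>j=1..N. (x j)\<^sup>2)"
    by (rule spec_norm_mult_le)
  finally show ?thesis .
qed

lemma twice_abs_sum_less:
  fixes f :: "'a \<Rightarrow> real"
  assumes fin: "finite A" and nonempty: "A \<noteq> {}"
    and small: "\<forall>j\<in>A. 2 * real (card A) * \<bar>f j\<bar> < b"
  shows "2 * \<bar>\<Sum>j\<in>A. f j\<bar> < b"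
proof -
  have "real (card A) * (2 * \<bar>\<Sum>j\<in>A. f j\<bar>) \<le> (\<Sum>j\<in>A. 2 * real (card A) * \<bar>f j\<bar>)"
    using mult_left_mono[OF sum_abs[of f A], of "2 * real (card A)"]
    by (simp add: sum_distrib_left mult_ac)
  also have "\<dots> < (\<Sum>j\<in>A. b)"
    using fin nonempty small by (intro sum_strict_mono) auto
  also have "\<dots> = real (card A) * b"
    by simp
  finally show ?thesis
    using fin nonempty by (simp add: mult_less_cancel_left_pos card_gt_0_iff)
qed

lemma round_half_up_eq:
  assumes "\<bar>a - real_of_int z\<bar> < 1/2"
  shows "round_half_up a = z"
proof -
  have "real_of_int z \<le> a + 1/2" and "a + 1/2 < real_of_int z + 1"
    using assms unfolding abs_less_iff by linarith+
  then show ?thesis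
    unfolding round_half_up_def by (intro floor_unique) auto
qed

lemma decode_mod_eq:
  fixes p :: nat and v :: int
  assumes "\<bar>real_of_int v\<bar> < (real p - 1) / 2"
  shows "decode p \<sigma> (v mod int p) = real_of_int v / 10 ^ \<sigma>"
proof (cases "v \<ge> 0")
  case True
  with assms have "v mod int p = v"
    by (intro mod_pos_pos_trivial) (simp_all add: abs_less_iff)
  with True assms show ?thesis
    by (simp add: decode_def)
next
  case False
  with assms have "v mod int p = v + int p"
    using mod_pos_pos_trivial[of "v + int p" "int p"] by (simp add: abs_less_iff)
  with False assms show ?thesis
    by (simp add: decode_def abs_less_iff)
qed

lemma consensus_round_eq_sum:
  fixes p :: nat and s :: "nat \<Rightarrow> int"
  assumes i: "i \<in> {1..N}"
    and contraction: "2 * real p * sqrt (real N)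
                        * spec_norm N (\<lambda>i j. real N * mat_pow N (mh N E) K i j - 1) < 1"
    and s_range: "\<forall>j\<in>{1..N}. 0 \<le> s j \<and> s j < int p"
  shows "round_half_up (real N * cons_iter N E (\<lambda>j. real_of_int (s j)) K i) = (\<Sum>j=1..N. s j)"
proof (rule round_half_up_eq)
  define M where "M i j = real N * mat_pow N (mh N E) K i j - 1" for i j
  have "real N * cons_iter N E (\<lambda>j. real_of_int (s j)) K i - real_of_int (\<Sum>j=1..N. s j)
        = (\<Sum>j=1..N. M i j * s j)"
    by (simp add: cons_iter_eq_mat_pow[OF i] M_def sum_distrib_left algebra_simps sum_subtractf)
  also have "\<bar>\<dots>\<bar> \<le> spec_norm N M * sqrt (\<Sum>j=1..N. (real_of_int (s j))\<^sup>2)"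
    by (rule abs_row_le_spec_norm[OF i])
  also have "\<dots> \<le> spec_norm N M * sqrt (\<Sum>j=1..N. (real p)\<^sup>2)"
  proof -
    have "0 \<le> real_of_int (s j) \<and> real_of_int (s j) \<le> real p" if "j \<in> {1..N}" for j
      using s_range that by (metis less_imp_le of_int_0_le_iff of_int_le_iff of_int_of_nat_eq)
    then show ?thesis
      by (intro mult_left_mono spec_norm_nonneg real_sqrt_le_mono sum_mono power_mono) auto
  qed
  also have "\<dots> = spec_norm N M * (sqrt (real N) * real p)"
    by (simp add: real_sqrt_mult)
  also have "\<dots> < 1/2"
    using contraction unfolding M_def by (simp add: algebra_simps)
  finally show "\<bar>real N * cons_iter N E (\<lambda>j. real_of_int (s j)) K i - real_of_int (\<Sum>j=1..N. s j)\<bar>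
                < 1/2" .
qed

lemma alg_output_eq_sum:
  fixes p :: nat and W :: "nat \<Rightarrow> nat \<Rightarrow> real"
  assumes p: "prime p" and N_less: "N < p" and i: "i \<in> {1..N}"
    and sym: "\<forall>i j. E i j = E j i"
    and contraction: "2 * real p * sqrt (real N)
                        * spec_norm N (\<lambda>i j. real N * mat_pow N (mh N E) K i j - 1) < 1"
    and integral: "\<forall>j\<in>{1..N}. 10 ^ \<sigma> * W j l \<in> \<int>"
    and small: "\<forall>j\<in>{1..N}. 1 + 2 * 10 ^ \<sigma> * real N * \<bar>W j l\<bar> < real p"
  shows "alg_output N \<sigma> p K E W c i l = (\<Sum>j=1..N. W j l)"
proof -
  define Y where "Y j l' = \<lfloor>10 ^ \<sigma> * W j l'\<rfloor>" for j l'
  define s where "s j = s0 p N E Y c j l" for j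
  have Y_eq: "real_of_int (Y j l) = 10 ^ \<sigma> * W j l" if "j \<in> {1..N}" for j
    using integral that unfolding Y_def by (metis Ints_cases floor_of_int)
  have "p > 0"
    using p prime_gt_0_nat by blast
  then have "round_half_up (real N * cons_iter N E (\<lambda>j. real_of_int (s j)) K i) = (\<Sum>j=1..N. s j)"
    by (intro consensus_round_eq_sum[OF i contraction]) (simp add: s_def s0_def)
  moreover have "(\<Sum>j=1..N. s j) mod int p = (\<Sum>j=1..N. Y j l) mod int p"
    using sum_s0_cong[OF p N_less sym] unfolding s_def cong_def .
  moreover have "\<bar>real_of_int (\<Sum>j=1..N. Y j l)\<bar> < (real p - 1) / 2"
  proof -
    have "2 * \<bar>\<Sum>j=1..N. real_of_int (Y j l)\<bar> < real p - 1"
    proof (rule twice_abs_sum_less)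
      show "\<forall>j\<in>{1..N}. 2 * real (card {1..N}) * \<bar>real_of_int (Y j l)\<bar> < real p - 1"
      proof
        fix j assume j: "j \<in> {1..N}"
        show "2 * real (card {1..N}) * \<bar>real_of_int (Y j l)\<bar> < real p - 1"
          using small[rule_format, OF j] Y_eq[OF j] by (simp add: abs_mult mult_ac)
      qed
    qed (use i in auto)
    then show ?thesis
      by simp
  qed
  moreover have "real_of_int (\<Sum>j=1..N. Y j l) / 10 ^ \<sigma> = (\<Sum>j=1..N. W j l)"
    using Y_eq by (simp add: sum_divide_distrib)
  ultimately show ?thesis
    unfolding alg_output_def Let_def Y_def[symmetric] s_def[symmetric] by (simp add: decode_mod_eq)
qed

theorem theorem6p1:
  fixes N n T K \<sigma> p :: nat
    and w :: "nat \<Rightarrow> real"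
    and \<theta> :: "nat \<Rightarrow> nat \<Rightarrow> nat \<Rightarrow> real"
    and E :: "nat \<Rightarrow> nat \<Rightarrow> nat \<Rightarrow> bool"
    and c :: "nat \<Rightarrow> nat \<Rightarrow> nat \<Rightarrow> nat \<Rightarrow> int"
  assumes p_prime: "prime p"
    and T_pos: "0 < T" and K_pos: "0 < K"
    and w_range: "\<forall>i\<in>{1..N}. 0 < w i \<and> w i \<le> 1"
    and precision: "\<forall>t\<in>{1..T}. \<forall>i\<in>{1..N}. \<forall>l\<in>{1..n}. 10 ^ \<sigma> * (w i * \<theta> t i l) \<in> \<int>"
    and graphs: "\<forall>t\<in>{1..T}. undirected_connected N (E t)"
    and coeffs: "\<forall>t\<in>{1..T}. \<forall>i\<in>{1..N}. \<forall>l\<in>{1..n}. \<forall>m\<in>{1..card (nbrs N (E t) i)}.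
                   0 \<le> c t i l m \<and> c t i l m < int p"
    and coeff_top: "\<forall>t\<in>{1..T}. \<forall>i\<in>{1..N}. \<forall>l\<in>{1..n}.
                   0 < card (nbrs N (E t) i) \<longrightarrow> c t i l (card (nbrs N (E t) i)) \<noteq> 0"
    and p_N: "N < p"
    and p_theta: "\<forall>t\<in>{1..T}. \<forall>i\<in>{1..N}. \<forall>l\<in>{1..n}.
                   1 + 2 * 10 ^ \<sigma> * real N * \<bar>\<theta> t i l\<bar> < real p"
    and p_K: "\<forall>t\<in>{1..T}. 2 * real p * sqrt (real N) *
                 spec_norm N (\<lambda>i j. real N * mat_pow N (mh N (E t)) K i j - 1) < 1"
  shows "\<forall>t\<in>{1..T}. \<forall>i\<in>{1..N}. \<forall>l\<in>{1..n}.
           alg_output N \<sigma> p K (E t) (\<lambda>j l'. w j * \<theta> t j l') (c t) i l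
             = (\<Sum>j=1..N. w j * \<theta> t j l)"
proof (intro ballI)
  fix t i l assume t: "t \<in> {1..T}" and i: "i \<in> {1..N}" and l: "l \<in> {1..n}"
  (* Of the graph assumptions only symmetry is needed: connectivity is what makes p_K satisfiable,
     and the conditions on the random coefficients concern privacy, not correctness. *)
  have sym: "\<forall>i j. E t i j = E t j i"
    using graphs t unfolding undirected_connected_def by blast
  have small: "1 + 2 * 10 ^ \<sigma> * real N * \<bar>w j * \<theta> t j l\<bar> < real p" if j: "j \<in> {1..N}" for j
  proof -
    have "0 < w j" and "w j \<le> 1"
      using w_range j by auto
    then have "\<bar>w j * \<theta> t j l\<bar> \<le> \<bar>\<theta> t j l\<bar>"
      by (simp add: abs_mult abs_of_pos mult_left_le_one_le)
    then have "2 * 10 ^ \<sigma> * real N * \<bar>w j * \<theta> t j l\<bar> \<le> 2 * 10 ^ \<sigma> * real N * \<bar>\<theta> t j l\<bar>"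
      by (intro mult_left_mono) auto
    moreover have "1 + 2 * 10 ^ \<sigma> * real N * \<bar>\<theta> t j l\<bar> < real p"
      using p_theta t j l by blast
    ultimately show ?thesis
      by linarith
  qed
  show "alg_output N \<sigma> p K (E t) (\<lambda>j l'. w j * \<theta> t j l') (c t) i l = (\<Sum>j=1..N. w j * \<theta> t j l)"
    using precision p_K t l small by (intro alg_output_eq_sum[OF p_prime p_N i sym]) auto
qed

end
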